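(* Let $s>0$, $p\in(0,\infty)$, $q\in(1,\infty)$ with $s>\frac1p-1$, and let $H$ be the Hilbert transform on $\mathbb{R}$. Suppose $\alpha\ge0$ is such that there is $C>0$ with $$\|Hf\|_{L^p(w)}\le C[w]_{A_q}^\alpha\|\mathcal{M}^sf\|_{L^p(w)}$$ for all $w\in A_q$ and all $f\in H^p(w)\cap L^1_{\mathrm{loc}}(\mathbb{R})$. Then $\alpha\ge1$.
   Context: Weights are locally integrable positive functions on $\mathbb{R}$, $\|f\|_{L^p(w)}=(\int|f|^pw)^{1/p}$, $[w]_{A_q}:=\sup_I\langle w\rangle_I\langle w^{-1/(q-1)}\rangle_I^{q-1}$ over intervals $I$, $w\in A_q$ iff finite. $H^p(w)$: tempered distributions $f$ with $\|\sup_{|x-y|\le t}|\psi_t*f(y)|\|_{L^p(w)}<\infty$ for a fixed $\psi\in\mathcal{S}(\mathbb{R})$ with $\int\psi=1$, $\psi_t=t^{-1}\psi(\cdot/t)$. Write $s=m+\delta$, $m\in\mathbb{N}$, $\delta\in(0,1]$; $\mathcal{F}_s(I)$ is the set of $\varphi$ supported in the interval $I$ with $|\varphi^{(k)}|\le|I|^{-k}$ ($k\le m$) and $|\varphi^{(m)}(y)-\varphi^{(m)}(y')|\le|y-y'|^\delta|I|^{-s}$; $\mathcal{M}^sf(x)=\sup_{I\ni x}\sup_{\varphi\in\mathcal{F}_s(I)}\frac1{|I|}|\int_If\varphi|$. *)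

theory Defs
  imports "HOL-Analysis.Analysis"
begin

text \<open>Real powers of extended nonnegative reals (used only with positive exponents):
  infinity stays infinity.\<close>
definition enn_powr :: "ennreal \<Rightarrow> real \<Rightarrow> ennreal" where
  "enn_powr x r = (if x = top then top else ennreal (enn2real x powr r))"

definition is_weight :: "(real \<Rightarrow> real) \<Rightarrow> bool" where
  "is_weight w \<longleftrightarrow> (\<forall>x. w x > 0) \<and> w \<in> borel_measurable borel \<and>
     (\<forall>a b. set_integrable lborel {a..b} w)"

definition wnorm :: "real \<Rightarrow> (real \<Rightarrow> real) \<Rightarrow> (real \<Rightarrow> ennreal) \<Rightarrow> ennreal" where
  "wnorm p w F = enn_powr (\<integral>\<^sup>+ x. enn_powr (F x) p * ennreal (w x) \<partial>lborel) (1 / p)"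

definition avg :: "(real \<Rightarrow> real) \<Rightarrow> real \<Rightarrow> real \<Rightarrow> real" where
  "avg g a b = (LINT x:{a..b}|lborel. g x) / (b - a)"

definition Aq_vals :: "real \<Rightarrow> (real \<Rightarrow> real) \<Rightarrow> real set" where
  "Aq_vals q w = {avg w a b * avg (\<lambda>x. w x powr (-1 / (q - 1))) a b powr (q - 1) | a b. a < b}"

definition in_Aq :: "real \<Rightarrow> (real \<Rightarrow> real) \<Rightarrow> bool" where
  "in_Aq q w \<longleftrightarrow> is_weight w \<and>
     (\<forall>a b. set_integrable lborel {a..b} (\<lambda>x. w x powr (-1 / (q - 1)))) \<and>
     bdd_above (Aq_vals q w)"

definition Aq_const :: "real \<Rightarrow> (real \<Rightarrow> real) \<Rightarrow> real" where
  "Aq_const q w = Sup (Aq_vals q w)"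

text \<open>The fixed Schwartz function \<open>\<psi>\<close> with integral 1 (Gaussian) and its dilates.\<close>
definition psi :: "real \<Rightarrow> real" where
  "psi x = exp (- pi * x\<^sup>2)"

definition psi_t :: "real \<Rightarrow> real \<Rightarrow> real" where
  "psi_t t x = psi (x / t) / t"

definition nt_max :: "(real \<Rightarrow> real) \<Rightarrow> real \<Rightarrow> ennreal" where
  "nt_max f x = Sup {ennreal \<bar>LINT z|lborel. psi_t t (y - z) * f z\<bar> | t y. t > 0 \<and> \<bar>x - y\<bar> \<le> t}"

definition loc_int :: "(real \<Rightarrow> real) \<Rightarrow> bool" where
  "loc_int f \<longleftrightarrow> f \<in> borel_measurable borel \<and> (\<forall>a b. set_integrable lborel {a..b} f)"

text \<open>Locally integrable elements of \<open>H^p(w)\<close> (with polynomial growth, so that they are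
  tempered distributions).\<close>
definition Hp_loc :: "real \<Rightarrow> (real \<Rightarrow> real) \<Rightarrow> (real \<Rightarrow> real) \<Rightarrow> bool" where
  "Hp_loc p w f \<longleftrightarrow> loc_int f \<and>
     (\<exists>N::nat. integrable lborel (\<lambda>x. f x / (1 + \<bar>x\<bar>) ^ N)) \<and>
     wnorm p w (nt_max f) < top"

text \<open>Decomposition \<open>s = m + \<delta>\<close>, \<open>m \<in> \<nat>\<close>, \<open>\<delta> \<in> (0,1]\<close>.\<close>
definition s_int :: "real \<Rightarrow> nat" where
  "s_int s = nat (\<lceil>s\<rceil> - 1)"

definition s_frac :: "real \<Rightarrow> real" where
  "s_frac s = s - real (s_int s)"

definition Fs :: "real \<Rightarrow> real \<Rightarrow> real \<Rightarrow> (real \<Rightarrow> real) set" where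
  "Fs s a b = {\<phi>. (\<forall>y. y \<notin> {a..b} \<longrightarrow> \<phi> y = 0) \<and>
     (\<forall>k < s_int s. \<forall>y. ((deriv ^^ k) \<phi> has_real_derivative (deriv ^^ Suc k) \<phi> y) (at y)) \<and>
     (\<forall>k \<le> s_int s. \<forall>y. \<bar>(deriv ^^ k) \<phi> y\<bar> \<le> (b - a) powr (- real k)) \<and>
     (\<forall>y y'. \<bar>(deriv ^^ s_int s) \<phi> y - (deriv ^^ s_int s) \<phi> y'\<bar>
              \<le> \<bar>y - y'\<bar> powr s_frac s * (b - a) powr (- s))}"

definition Ms :: "real \<Rightarrow> (real \<Rightarrow> real) \<Rightarrow> real \<Rightarrow> ennreal" where
  "Ms s f x = Sup {ennreal (\<bar>LINT y:{a..b}|lborel. f y * \<phi> y\<bar> / (b - a)) | a b \<phi>.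
                    a < b \<and> x \<in> {a..b} \<and> \<phi> \<in> Fs s a b}"

definition hilbert_pv :: "(real \<Rightarrow> real) \<Rightarrow> real \<Rightarrow> real \<Rightarrow> bool" where
  "hilbert_pv f x L \<longleftrightarrow>
     ((\<lambda>\<epsilon>. (1 / pi) * (LINT y:{y. \<epsilon> < \<bar>x - y\<bar> \<and> \<bar>x - y\<bar> < 1 / \<epsilon>}|lborel. f y / (x - y)))
        \<longlongrightarrow> L) (at_right 0)"

definition is_hilbert :: "(real \<Rightarrow> real) \<Rightarrow> (real \<Rightarrow> real) \<Rightarrow> bool" where
  "is_hilbert f g \<longleftrightarrow> g \<in> borel_measurable borel \<and> (AE x in lborel. hilbert_pv f x (g x))"

end

theory Submission
  imports Defs "HOL-Probability.Distributions"
begin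

text \<open>Test the inequality on \<open>f = indicator [0,1]\<close> and the power weights
  \<open>w(x) = |x| powr (\<delta> - 1)\<close>, \<open>0 < \<delta> \<le> 1\<close>, whose \<open>A_q\<close> characteristic is at most \<open>4/\<delta>\<close>.
  Both maximal functions of \<open>f\<close> are bounded by \<open>min 1 (c/|x|)\<close>, so their \<open>L^p(w)\<close> norms are
  \<open>O(\<delta> powr (-1/p))\<close> once \<open>\<delta> \<le> p/2\<close>. On the other hand \<open>Hf(x) = (ln |x| - ln |x - 1|)/\<pi>\<close>
  exceeds \<open>1/(2\<pi>\<delta>)\<close> on \<open>(0, exp (-1/\<delta>)]\<close>, a set of \<open>w\<close>-measure \<open>exp (-1)/\<delta>\<close>, so
  \<open>||Hf|| \<ge> c \<delta> powr (-1 - 1/p)\<close>. The assumed inequality therefore gives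
  \<open>\<delta> powr (-1) \<le> C' \<delta> powr (-\<alpha>)\<close> for all small \<open>\<delta>\<close>, which forces \<open>\<alpha> \<ge> 1\<close>.\<close>

lemma enn_powr_le_ennreal:
  assumes "0 \<le> m" "0 < p" "x \<le> ennreal m"
  shows "enn_powr x p \<le> ennreal (m powr p)"
proof -
  have "x \<noteq> top" using assms(3) by (auto simp: top_unique)
  moreover have "enn2real x \<le> m" using assms by (intro enn2real_leI) auto
  ultimately show ?thesis using assms
    by (auto simp: enn_powr_def intro!: ennreal_leI powr_mono2)
qed

lemma ennreal_le_enn_powr:
  assumes "0 \<le> m" "0 < p" "ennreal m \<le> x"
  shows "ennreal (m powr p) \<le> enn_powr x p"
proof (cases "x = top")
  case False
  then have "ennreal m \<le> ennreal (enn2real x)"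
    using assms by (simp add: ennreal_enn2real_if)
  then have "m \<le> enn2real x"
    using assms(1) enn2real_nonneg[of x] by (auto simp add: ennreal_le_iff2)
  then show ?thesis using assms False
    by (auto simp: enn_powr_def intro!: ennreal_leI powr_mono2)
qed (simp add: enn_powr_def)

lemma divide_powr_eq: "0 \<le> a \<Longrightarrow> 0 < d \<Longrightarrow> (a / d) powr x = a powr x * d powr (- x)"
  for a d x :: real
  by (simp add: powr_divide powr_minus_divide)

lemma nn_integral_even_le:
  fixes h :: "real \<Rightarrow> ennreal"
  assumes [measurable]: "h \<in> borel_measurable borel"
  shows "(\<integral>\<^sup>+x. h \<bar>x\<bar> \<partial>lborel) \<le> 2 * (\<integral>\<^sup>+x. h x * indicator {0..} x \<partial>lborel)"
proof -
  have "(\<integral>\<^sup>+x. h \<bar>x\<bar> \<partial>lborel)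
      \<le> (\<integral>\<^sup>+x. h x * indicator {0..} x + h (-x) * indicator {0..} (-x) \<partial>lborel)"
    by (intro nn_integral_mono) (auto simp: indicator_def)
  also have "\<dots> = (\<integral>\<^sup>+x. h x * indicator {0..} x \<partial>lborel)
      + (\<integral>\<^sup>+x. h (-x) * indicator {0..} (-x) \<partial>lborel)"
    by (intro nn_integral_add) auto
  also have "(\<integral>\<^sup>+x. h (-x) * indicator {0..} (-x) \<partial>lborel) = (\<integral>\<^sup>+x. h x * indicator {0..} x \<partial>lborel)"
    using nn_integral_real_affine[of "\<lambda>x. h x * indicator {0..} x" "-1" 0] by simp
  finally show ?thesis by (simp add: mult_2)
qed

lemma nn_integral_powr_Icc_0:
  assumes "0 < d" "0 < c"
  shows "(\<integral>\<^sup>+x. ennreal (x powr (d - 1)) * indicator {0..c} x \<partial>lborel) = ennreal (c powr d / d)"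
  using nn_integral_has_integral_lebesgue'[OF _ has_integral_powr_from_0[of "d - 1" c]] assms by simp

lemma nn_integral_powr_Ici:
  assumes "e < -1" "0 < c"
  shows "(\<integral>\<^sup>+x. ennreal (x powr e) * indicator {c..} x \<partial>lborel) = ennreal (- (c powr (e + 1)) / (e + 1))"
  using nn_integral_has_integral_lebesgue'[OF _ has_integral_powr_to_inf[of e c]] assms by simp

lemma set_integral_bounded_nonneg:
  fixes g :: "real \<Rightarrow> real"
  assumes [measurable]: "g \<in> borel_measurable borel" "S \<in> sets borel"
    and nonneg: "\<And>x. 0 \<le> g x" and "0 \<le> B"
    and bound: "(\<integral>\<^sup>+ x. ennreal (g x) * indicator S x \<partial>lborel) \<le> ennreal B"
  shows "set_integrable lborel S g" and "(LINT x:S|lborel. g x) \<le> B"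
proof -
  have eq: "ennreal (norm (indicator S x *\<^sub>R g x)) = ennreal (g x) * indicator S x"
    "ennreal (indicator S x *\<^sub>R g x) = ennreal (g x) * indicator S x" for x
    using nonneg by (auto simp: indicator_def)
  show integrable: "set_integrable lborel S g" unfolding set_integrable_def
    by (rule integrableI_bounded) (use eq bound in \<open>auto simp: top_unique intro: le_less_trans\<close>)
  have "ennreal (LINT x:S|lborel. g x) = (\<integral>\<^sup>+ x. ennreal (g x) * indicator S x \<partial>lborel)"
    unfolding set_lebesgue_integral_def eq(2)[symmetric]
    by (rule nn_integral_eq_integral[symmetric])
      (use integrable nonneg in \<open>auto simp: set_integrable_def\<close>)
  also have "\<dots> \<le> ennreal B" by (rule bound)
  finally show "(LINT x:S|lborel. g x) \<le> B" using \<open>0 \<le> B\<close> by simp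
qed

lemma avg_nonneg: "(\<And>x. 0 \<le> g x) \<Longrightarrow> a < b \<Longrightarrow> 0 \<le> avg g a b"
  unfolding avg_def set_lebesgue_integral_def
  by (intro divide_nonneg_pos integral_nonneg_AE) (auto simp: indicator_def)

lemma avg_le_of_nn_integral_le:
  assumes [measurable]: "g \<in> borel_measurable borel" and "\<And>x. 0 \<le> g x" "a < b" "0 \<le> B"
    and "(\<integral>\<^sup>+ x. ennreal (g x) * indicator {a..b} x \<partial>lborel) \<le> ennreal (B * (b - a))"
  shows "avg g a b \<le> B"
proof -
  have "(LINT x:{a..b}|lborel. g x) \<le> B * (b - a)"
    by (rule set_integral_bounded_nonneg(2)) (use assms in auto)
  with \<open>a < b\<close> show ?thesis by (simp add: avg_def divide_le_eq)
qed

lemma avg_le_of_AE_le: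
  assumes [measurable]: "g \<in> borel_measurable borel" and "\<And>x. 0 \<le> g x" "a < b" "0 \<le> B"
    and "AE x in lborel. x \<in> {a..b} \<longrightarrow> g x \<le> B"
  shows "avg g a b \<le> B"
proof (rule avg_le_of_nn_integral_le)
  have "(\<integral>\<^sup>+ x. ennreal (g x) * indicator {a..b} x \<partial>lborel) \<le> (\<integral>\<^sup>+ x. ennreal B * indicator {a..b} x \<partial>lborel)"
    using assms(5) by (intro nn_integral_mono_AE) (auto simp: indicator_def intro: ennreal_leI)
  also have "\<dots> = ennreal (B * (b - a))"
    using assms by (simp add: nn_integral_cmult_indicator ennreal_mult)
  finally show "(\<integral>\<^sup>+ x. ennreal (g x) * indicator {a..b} x \<partial>lborel) \<le> ennreal (B * (b - a))" .
qed (use assms in auto)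

lemma powr_exponent_le_of_bounded_near_0:
  fixes a b K L d0 :: real
  assumes "0 < K" "0 < d0" and bound: "\<And>d. 0 < d \<Longrightarrow> d \<le> d0 \<Longrightarrow> K * d powr a \<le> L * d powr b"
  shows "b \<le> a"
proof (rule ccontr)
  assume "\<not> b \<le> a"
  have "((\<lambda>d. L * d powr (b - a)) \<longlongrightarrow> L * 0) (at_right 0)"
  proof (intro tendsto_mult tendsto_const tendsto_zero_powrI tendsto_ident_at)
    show "\<forall>\<^sub>F d in at_right 0. 0 \<le> (d::real)"
      by (rule eventually_at_rightI[of _ 1]) auto
  qed (use \<open>\<not> b \<le> a\<close> in auto)
  moreover have "\<forall>\<^sub>F d in at_right 0. K \<le> L * d powr (b - a)"
  proof (rule eventually_at_rightI[OF _ \<open>0 < d0\<close>])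
    fix d :: real assume "d \<in> {0<..<d0}"
    then have "K * d powr a \<le> L * d powr b" "0 < d powr a" by (auto intro: bound)
    then show "K \<le> L * d powr (b - a)"
      by (simp add: powr_diff field_simps)
  qed
  ultimately have "K \<le> L * 0"
    by (intro tendsto_lowerbound) auto
  with \<open>0 < K\<close> show False by simp
qed

lemma Aq_const_nonneg:
  assumes "in_Aq q w"
  shows "0 \<le> Aq_const q w"
proof -
  define v where "v = avg w 0 1 * avg (\<lambda>x. w x powr (-1 / (q - 1))) 0 1 powr (q - 1)"
  have "v \<in> Aq_vals q w"
    unfolding Aq_vals_def v_def by (intro CollectI exI[of _ 0] exI[of _ 1]) simp
  have "0 \<le> v"
    using assms by (auto simp: v_def in_Aq_def is_weight_def less_imp_le intro!: mult_nonneg_nonneg avg_nonneg)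
  also have "v \<le> Aq_const q w"
    using assms \<open>v \<in> Aq_vals q w\<close> unfolding Aq_const_def in_Aq_def by (blast intro: cSup_upper)
  finally show ?thesis .
qed

section \<open>Power weights\<close>

text \<open>The value at \<open>0\<close> only keeps the weight positive everywhere, as \<^const>\<open>is_weight\<close> demands.\<close>

definition power_weight :: "real \<Rightarrow> real \<Rightarrow> real" where
  "power_weight d x = (if x = 0 then 1 else \<bar>x\<bar> powr (d - 1))"

lemma power_weight_pos: "0 < power_weight d x"
  by (simp add: power_weight_def)

lemma power_weight_measurable [measurable]: "power_weight d \<in> borel_measurable borel"
  unfolding power_weight_def by measurable

lemma power_weight_powr:
  assumes "1 < q"
  shows "power_weight d x powr (-1 / (q - 1)) = power_weight (1 + (1 - d) / (q - 1)) x"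
proof -
  have "(d - 1) * (-1 / (q - 1)) = 1 + (1 - d) / (q - 1) - 1"
    using assms by (simp add: field_simps)
  then show ?thesis
    unfolding power_weight_def by (simp add: powr_powr)
qed

lemma nn_integral_power_weight_sym_le:
  assumes "0 < d" "0 < R"
  shows "(\<integral>\<^sup>+x. ennreal (power_weight d x) * indicator {-R..R} x \<partial>lborel) \<le> ennreal (2 * (R powr d / d))"
proof -
  define h where "h r = ennreal (r powr (d - 1)) * indicator {..R} r" for r :: real
  have "(\<integral>\<^sup>+x. ennreal (power_weight d x) * indicator {-R..R} x \<partial>lborel) = (\<integral>\<^sup>+x. h \<bar>x\<bar> \<partial>lborel)"
    by (intro nn_integral_cong_AE, rule AE_mp[OF AE_lborel_singleton[of 0]])
       (auto simp: h_def power_weight_def indicator_def)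
  also have "\<dots> \<le> 2 * (\<integral>\<^sup>+x. h x * indicator {0..} x \<partial>lborel)"
    by (rule nn_integral_even_le) (simp add: h_def)
  also have "(\<integral>\<^sup>+x. h x * indicator {0..} x \<partial>lborel)
      = (\<integral>\<^sup>+x. ennreal (x powr (d - 1)) * indicator {0..R} x \<partial>lborel)"
    by (intro nn_integral_cong) (auto simp: h_def indicator_def)
  also have "\<dots> = ennreal (R powr d / d)"
    using assms by (rule nn_integral_powr_Icc_0)
  also have "2 * ennreal (R powr d / d) = ennreal (2 * (R powr d / d))"
    using assms by (subst ennreal_mult) auto
  finally show ?thesis .
qed

lemma set_integrable_power_weight:
  assumes "0 < d"
  shows "set_integrable lborel {a..b} (power_weight d)"
proof (rule set_integral_bounded_nonneg(1))
  define R where "R = \<bar>a\<bar> + \<bar>b\<bar> + 1"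
  have "(\<integral>\<^sup>+x. ennreal (power_weight d x) * indicator {a..b} x \<partial>lborel)
      \<le> (\<integral>\<^sup>+x. ennreal (power_weight d x) * indicator {-R..R} x \<partial>lborel)"
    by (intro nn_integral_mono) (auto simp: indicator_def R_def)
  also have "\<dots> \<le> ennreal (2 * (R powr d / d))"
    using assms by (intro nn_integral_power_weight_sym_le) (auto simp: R_def)
  finally show "(\<integral>\<^sup>+x. ennreal (power_weight d x) * indicator {a..b} x \<partial>lborel) \<le> ennreal (2 * (R powr d / d))" .
qed (use assms in \<open>auto simp: less_imp_le power_weight_pos\<close>)

lemma abs_le_max_abs_Icc: "x \<in> {a..b} \<Longrightarrow> \<bar>x\<bar> \<le> max \<bar>a\<bar> \<bar>b\<bar>"
  for x a b :: real
  by (cases "0 \<le> x") auto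

lemma avg_power_weight_le_ge1:
  assumes "1 \<le> e" "a < b"
  shows "avg (power_weight e) a b \<le> max \<bar>a\<bar> \<bar>b\<bar> powr (e - 1)"
proof (rule avg_le_of_AE_le)
  have bound: "power_weight e x \<le> max \<bar>a\<bar> \<bar>b\<bar> powr (e - 1)" if "x \<noteq> 0" "x \<in> {a..b}" for x
    using that abs_le_max_abs_Icc[OF that(2)] assms(1) by (simp add: power_weight_def powr_mono2)
  show "AE x in lborel. x \<in> {a..b} \<longrightarrow> power_weight e x \<le> max \<bar>a\<bar> \<bar>b\<bar> powr (e - 1)"
    using AE_lborel_singleton[of 0] by eventually_elim (use bound in blast)
qed (auto simp: less_imp_le power_weight_pos assms)

lemma avg_power_weight_le:
  assumes d: "0 < d" "d \<le> 1" and "a < b"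
  shows "avg (power_weight d) a b \<le> 4 / d * max \<bar>a\<bar> \<bar>b\<bar> powr (d - 1)"
proof -
  define R where "R = max \<bar>a\<bar> \<bar>b\<bar>"
  have R: "0 < R" using \<open>a < b\<close> by (auto simp: R_def)
  have bound_nonneg: "0 \<le> 4 / d * R powr (d - 1)" using d by simp
  \<comment> \<open>Long intervals are compared with \<open>[-R,R]\<close>; short ones stay at distance \<open>\<ge> R/2\<close> from \<open>0\<close>.\<close>
  show ?thesis
  proof (cases "R / 2 \<le> b - a")
    case True
    have "(\<integral>\<^sup>+x. ennreal (power_weight d x) * indicator {a..b} x \<partial>lborel)
        \<le> (\<integral>\<^sup>+x. ennreal (power_weight d x) * indicator {-R..R} x \<partial>lborel)"
      using abs_le_max_abs_Icc[of _ a b]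
      by (intro nn_integral_mono) (auto simp: indicator_def R_def abs_le_iff)
    also have "\<dots> \<le> ennreal (2 * (R powr d / d))"
      using d R by (intro nn_integral_power_weight_sym_le)
    also have "\<dots> \<le> ennreal (4 / d * R powr (d - 1) * (b - a))"
    proof (rule ennreal_leI)
      have "2 * (R powr d / d) = 4 / d * R powr (d - 1) * (R / 2)"
        using R by (simp add: powr_diff field_simps)
      also have "\<dots> \<le> 4 / d * R powr (d - 1) * (b - a)"
        using True bound_nonneg by (intro mult_left_mono) auto
      finally show "2 * (R powr d / d) \<le> 4 / d * R powr (d - 1) * (b - a)" .
    qed
    finally show ?thesis unfolding R_def
      using d \<open>a < b\<close> bound_nonneg
      by (intro avg_le_of_nn_integral_le) (auto simp: power_weight_pos less_imp_le R_def)
  next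
    case False
    have far: "R / 2 \<le> \<bar>x\<bar>" if "x \<in> {a..b}" for x
      using that False unfolding R_def by (cases "x \<ge> 0"; cases "a \<ge> 0"; cases "b \<ge> 0") auto
    have "power_weight d x \<le> 4 / d * R powr (d - 1)" if "x \<in> {a..b}" for x
    proof -
      have "power_weight d x = \<bar>x\<bar> powr (d - 1)"
        using far[OF that] R by (auto simp: power_weight_def)
      also have "\<dots> \<le> (R / 2) powr (d - 1)"
        using far[OF that] R d by (intro powr_mono2') auto
      also have "\<dots> = 2 powr (1 - d) * R powr (d - 1)"
        using R by (simp add: powr_divide powr_diff)
      also have "\<dots> \<le> 4 / d * R powr (d - 1)"
      proof (rule mult_right_mono)
        have "2 powr (1 - d) \<le> (2::real) powr 1" using d by (intro powr_mono) auto
        moreover have "2 \<le> 4 / d" using d by (simp add: field_simps)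
        ultimately show "2 powr (1 - d) \<le> 4 / d" by simp
      qed simp
      finally show ?thesis .
    qed
    then show ?thesis unfolding R_def
      using d \<open>a < b\<close> bound_nonneg
      by (intro avg_le_of_AE_le) (auto simp: power_weight_pos less_imp_le R_def)
  qed
qed

lemma Aq_vals_power_weight_le:
  assumes d: "0 < d" "d \<le> 1" and q: "1 < q" and "y \<in> Aq_vals q (power_weight d)"
  shows "y \<le> 4 / d"
proof -
  define e where "e = 1 + (1 - d) / (q - 1)"
  have dual_eq: "(\<lambda>x. power_weight d x powr (-1 / (q - 1))) = power_weight e"
    unfolding e_def by (intro ext power_weight_powr q)
  obtain a b where "a < b"
    and y: "y = avg (power_weight d) a b * avg (power_weight e) a b powr (q - 1)"
    using assms(4) unfolding Aq_vals_def dual_eq by blast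
  define R where "R = max \<bar>a\<bar> \<bar>b\<bar>"
  have R: "0 < R" using \<open>a < b\<close> by (auto simp: R_def)
  have e: "1 \<le> e" using d q by (simp add: e_def)
  have "avg (power_weight e) a b powr (q - 1) \<le> (R powr (e - 1)) powr (q - 1)"
    using avg_power_weight_le_ge1[OF e \<open>a < b\<close>] q \<open>a < b\<close>
    by (intro powr_mono2) (auto simp: R_def avg_nonneg less_imp_le power_weight_pos)
  also have "\<dots> = R powr (1 - d)"
    using q by (simp add: powr_powr e_def)
  finally have dual: "avg (power_weight e) a b powr (q - 1) \<le> R powr (1 - d)" .
  have "y \<le> 4 / d * R powr (d - 1) * R powr (1 - d)"
    unfolding y using avg_power_weight_le[OF d \<open>a < b\<close>] dual \<open>a < b\<close> d
    by (intro mult_mono) (auto simp: R_def avg_nonneg less_imp_le power_weight_pos)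
  also have "\<dots> = 4 / d"
    using R by (simp add: powr_add[symmetric])
  finally show ?thesis .
qed

lemma in_Aq_power_weight:
  assumes "0 < d" "d \<le> 1" "1 < q"
  shows "in_Aq q (power_weight d)"
proof -
  have "(\<lambda>x. power_weight d x powr (-1 / (q - 1))) = power_weight (1 + (1 - d) / (q - 1))"
    by (intro ext power_weight_powr \<open>1 < q\<close>)
  moreover have "0 < 1 + (1 - d) / (q - 1)"
    using assms by (simp add: add_pos_nonneg)
  ultimately show ?thesis
    using assms Aq_vals_power_weight_le[OF assms] unfolding in_Aq_def is_weight_def
    by (auto simp: power_weight_pos set_integrable_power_weight bdd_above_def)
qed

lemma Aq_const_power_weight_le:
  assumes "0 < d" "d \<le> 1" "1 < q"
  shows "Aq_const q (power_weight d) \<le> 4 / d"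
  unfolding Aq_const_def
  by (rule cSup_least) (auto simp: Aq_vals_def Aq_vals_power_weight_le[OF assms])

section \<open>Weighted norms of functions with \<open>1/|x|\<close> decay\<close>

lemma nn_integral_decay_profile:
  assumes d: "0 < d" "d < p" and c: "0 < c"
  shows "(\<integral>\<^sup>+x. ennreal (x powr (d - 1)) * indicator {0..c} x
           + ennreal (c powr p) * (ennreal (x powr (d - 1 - p)) * indicator {c..} x) \<partial>lborel)
     = ennreal (c powr d / d + c powr d / (p - d))" (is "?I = _")
proof -
  have "?I = (\<integral>\<^sup>+x. ennreal (x powr (d - 1)) * indicator {0..c} x \<partial>lborel)
      + ennreal (c powr p) * (\<integral>\<^sup>+x. ennreal (x powr (d - 1 - p)) * indicator {c..} x \<partial>lborel)"
    by (subst nn_integral_add) (auto simp: nn_integral_cmult)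
  also have "\<dots> = ennreal (c powr d / d)
      + ennreal (c powr p) * ennreal (- (c powr (d - 1 - p + 1)) / (d - 1 - p + 1))"
    using d c by (simp add: nn_integral_powr_Icc_0 nn_integral_powr_Ici)
  also have "ennreal (c powr p) * ennreal (- (c powr (d - 1 - p + 1)) / (d - 1 - p + 1))
      = ennreal (c powr d / (p - d))"
  proof -
    have "c powr p * (- (c powr (d - 1 - p + 1)) / (d - 1 - p + 1)) = c powr d / (p - d)"
      using c by (simp add: powr_add[symmetric] minus_divide_right)
    then show ?thesis
      using d by (subst ennreal_mult[symmetric]) (auto intro: divide_nonneg_neg)
  qed
  also have "ennreal (c powr d / d) + ennreal (c powr d / (p - d)) = ennreal (c powr d / d + c powr d / (p - d))"
    using d by (simp add: ennreal_plus)
  finally show ?thesis .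
qed

lemma nn_integral_power_weight_decay_le:
  fixes F :: "real \<Rightarrow> ennreal"
  assumes d: "0 < d" "d < p" and c: "0 < c"
    and F: "\<And>x. F x \<le> ennreal (if \<bar>x\<bar> \<le> c then 1 else c / \<bar>x\<bar>)"
  shows "(\<integral>\<^sup>+x. enn_powr (F x) p * ennreal (power_weight d x) \<partial>lborel)
     \<le> ennreal (2 * (c powr d / d + c powr d / (p - d)))"
proof -
  define h where "h r = ennreal (r powr (d - 1)) * indicator {..c} r
     + ennreal (c powr p * r powr (d - 1 - p)) * indicator {c<..} r" for r :: real
  have [measurable]: "h \<in> borel_measurable borel" unfolding h_def by measurable
  have pointwise: "enn_powr (F x) p * ennreal (power_weight d x) \<le> h \<bar>x\<bar>" if "x \<noteq> 0" for x
  proof (cases "\<bar>x\<bar> \<le> c")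
    case True
    have "enn_powr (F x) p \<le> ennreal (1 powr p)"
      using F[of x] True d by (intro enn_powr_le_ennreal) auto
    then have "enn_powr (F x) p * ennreal (power_weight d x) \<le> 1 * ennreal (power_weight d x)"
      by (intro mult_right_mono) auto
    then show ?thesis
      using True that by (simp add: h_def power_weight_def)
  next
    case False
    have "enn_powr (F x) p \<le> ennreal ((c / \<bar>x\<bar>) powr p)"
      using F[of x] False d c by (intro enn_powr_le_ennreal) auto
    then have "enn_powr (F x) p * ennreal (power_weight d x)
        \<le> ennreal ((c / \<bar>x\<bar>) powr p * \<bar>x\<bar> powr (d - 1))"
      using that by (simp add: power_weight_def ennreal_mult mult_right_mono)
    also have "(c / \<bar>x\<bar>) powr p * \<bar>x\<bar> powr (d - 1) = c powr p * \<bar>x\<bar> powr (d - 1 - p)"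
      using that c by (simp add: powr_divide powr_diff)
    finally show ?thesis using False by (simp add: h_def)
  qed
  have "(\<integral>\<^sup>+x. enn_powr (F x) p * ennreal (power_weight d x) \<partial>lborel) \<le> (\<integral>\<^sup>+x. h \<bar>x\<bar> \<partial>lborel)"
    using pointwise by (intro nn_integral_mono_AE) (auto intro: AE_mp[OF AE_lborel_singleton[of 0]])
  also have "\<dots> \<le> 2 * (\<integral>\<^sup>+x. h x * indicator {0..} x \<partial>lborel)"
    by (rule nn_integral_even_le) simp
  also have "(\<integral>\<^sup>+x. h x * indicator {0..} x \<partial>lborel)
      \<le> (\<integral>\<^sup>+x. ennreal (x powr (d - 1)) * indicator {0..c} x
           + ennreal (c powr p) * (ennreal (x powr (d - 1 - p)) * indicator {c..} x) \<partial>lborel)"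
    by (intro nn_integral_mono) (auto simp: h_def indicator_def ennreal_mult)
  also have "\<dots> = ennreal (c powr d / d + c powr d / (p - d))"
    using assms by (intro nn_integral_decay_profile)
  also have "2 * \<dots> = ennreal (2 * (c powr d / d + c powr d / (p - d)))"
    using d c by (subst ennreal_mult) auto
  finally show ?thesis by (simp add: mult_left_mono)
qed

lemma wnorm_power_weight_decay_le:
  fixes F :: "real \<Rightarrow> ennreal"
  assumes d: "0 < d" "d \<le> 1" "d \<le> p / 2" and c: "1 \<le> c"
    and F: "\<And>x. F x \<le> ennreal (if \<bar>x\<bar> \<le> c then 1 else c / \<bar>x\<bar>)"
  shows "wnorm p (power_weight d) F \<le> ennreal ((4 * c / d) powr (1 / p))"
proof -
  have "c powr d \<le> c powr 1"
    using c d by (intro powr_mono) auto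
  then have "c powr d / d \<le> c / d" and "c powr d / (p - d) \<le> c / d"
    using c d by (auto intro!: divide_right_mono frac_le)
  then have "2 * (c powr d / d + c powr d / (p - d)) \<le> 4 * c / d"
    by simp
  moreover have "(\<integral>\<^sup>+x. enn_powr (F x) p * ennreal (power_weight d x) \<partial>lborel)
      \<le> ennreal (2 * (c powr d / d + c powr d / (p - d)))"
    by (rule nn_integral_power_weight_decay_le) (use d c F in auto)
  ultimately have "(\<integral>\<^sup>+x. enn_powr (F x) p * ennreal (power_weight d x) \<partial>lborel) \<le> ennreal (4 * c / d)"
    using ennreal_leI order.trans by blast
  then show ?thesis
    unfolding wnorm_def using d c by (intro enn_powr_le_ennreal) auto
qed

section \<open>Maximal functions of the indicator of \<open>[0,1]\<close>\<close>

lemma Fs_abs_le_1: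
  assumes "\<phi> \<in> Fs s a b" "a < b"
  shows "\<bar>\<phi> y\<bar> \<le> 1"
proof -
  have "\<bar>(deriv ^^ 0) \<phi> y\<bar> \<le> (b - a) powr (- real (0::nat))"
    using assms(1) unfolding Fs_def by blast
  then show ?thesis using assms(2) by simp
qed

lemma abs_integral_le_nn_integral:
  fixes g :: "'a \<Rightarrow> real"
  shows "ennreal \<bar>integral\<^sup>L M g\<bar> \<le> (\<integral>\<^sup>+ y. ennreal \<bar>g y\<bar> \<partial>M)"
proof (cases "integrable M g")
  case True
  then show ?thesis using integral_norm_bound_ennreal[OF True] by simp
qed (simp add: not_integrable_integral_eq)

lemma Ms_indicator_le: "Ms s (indicator {0..1}) x \<le> ennreal (if \<bar>x\<bar> \<le> 2 then 1 else 2 / \<bar>x\<bar>)"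
  unfolding Ms_def
proof (intro Sup_least, clarify)
  fix a b \<phi> assume ab: "a < b" and x: "x \<in> {a..b}" and \<phi>: "\<phi> \<in> Fs s a b"
  define I where "I = (LINT y:{a..b}|lborel. indicator {0..1} y * \<phi> y)"
  have "ennreal \<bar>indicator {a..b} y *\<^sub>R (indicator {0..1} y * \<phi> y)\<bar> \<le> indicator ({a..b} \<inter> {0..1}) y" for y
    using Fs_abs_le_1[OF \<phi> ab, of y] by (auto simp: indicator_def abs_mult)
  then have "ennreal \<bar>I\<bar> \<le> (\<integral>\<^sup>+ y. indicator ({a..b} \<inter> {0..1}) y \<partial>lborel)"
    unfolding I_def set_lebesgue_integral_def
    by (intro order.trans[OF abs_integral_le_nn_integral] nn_integral_mono)
  also have "\<dots> = emeasure lborel ({a..b} \<inter> {0..1})"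
    by (rule nn_integral_indicator) simp
  finally have I: "ennreal \<bar>I\<bar> \<le> emeasure lborel ({a..b} \<inter> {0..1})" .
  have "ennreal \<bar>I\<bar> \<le> emeasure lborel {a..b}"
    using order.trans[OF I emeasure_mono[of "{a..b} \<inter> {0..1}" "{a..b}" lborel]] by simp
  then have "\<bar>I\<bar> / (b - a) \<le> 1"
    using ab by simp
  moreover have "\<bar>I\<bar> / (b - a) \<le> 2 / \<bar>x\<bar>" if "2 < \<bar>x\<bar>"
  proof (cases "{a..b} \<inter> {0..1} = {}")
    case True
    then show ?thesis using I by simp
  next
    case False
    then obtain y where "y \<in> {a..b}" "y \<in> {0..1}" by blast
    then have "\<bar>x\<bar> / 2 \<le> b - a" using x that by auto
    have "ennreal \<bar>I\<bar> \<le> emeasure lborel {0..1::real}"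
      using order.trans[OF I emeasure_mono[of "{a..b} \<inter> {0..1}" "{0..1}" lborel]] by simp
    then have "\<bar>I\<bar> \<le> 1" by simp
    then show "\<bar>I\<bar> / (b - a) \<le> 2 / \<bar>x\<bar>"
      using \<open>\<bar>x\<bar> / 2 \<le> b - a\<close> that frac_le[of 1 "\<bar>I\<bar>" "\<bar>x\<bar> / 2" "b - a"] by simp
  qed
  ultimately show "ennreal (\<bar>I\<bar> / (b - a)) \<le> ennreal (if \<bar>x\<bar> \<le> 2 then 1 else 2 / \<bar>x\<bar>)"
    by (auto intro: ennreal_leI)
qed

lemma psi_t_eq_normal_density: "0 < t \<Longrightarrow> psi_t t (y - z) = normal_density y (t / sqrt (2 * pi)) z"
proof -
  assume t: "0 < t"
  have s: "(t / sqrt (2 * pi))\<^sup>2 = t\<^sup>2 / (2 * pi)" by (simp add: power_divide)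
  have "sqrt (2 * pi * (t / sqrt (2 * pi))\<^sup>2) = t" using t by (simp add: s)
  moreover have "- (z - y)\<^sup>2 / (2 * (t / sqrt (2 * pi))\<^sup>2) = - pi * ((y - z) / t)\<^sup>2"
    using t by (simp add: s power_divide power2_commute field_simps)
  ultimately show ?thesis
    by (simp add: psi_t_def psi_def normal_density_def)
qed

lemma psi_t_nonneg: "0 < t \<Longrightarrow> 0 \<le> psi_t t v"
  by (simp add: psi_t_def psi_def)

lemma psi_t_le: "0 < t \<Longrightarrow> psi_t t v \<le> 1 / t"
  by (simp add: psi_t_def psi_def divide_right_mono)

lemma psi_t_le_decay:
  assumes t: "0 < t" and v: "v \<noteq> 0"
  shows "psi_t t v \<le> t / (pi * v\<^sup>2)"
proof -
  define w where "w = pi * (v / t)\<^sup>2"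
  have w: "0 < w" using t v by (simp add: w_def)
  have "exp (- w) = 1 / exp w" by (simp add: exp_minus inverse_eq_divide)
  also have "\<dots> \<le> 1 / w"
  proof (rule divide_left_mono)
    show "w \<le> exp w" using exp_ge_add_one_self[of w] by linarith
  qed (use w in auto)
  finally have "exp (- w) \<le> 1 / w" .
  have "psi_t t v = exp (- w) / t"
    by (simp add: psi_t_def psi_def w_def)
  also have "\<dots> \<le> (1 / w) / t"
    by (rule divide_right_mono[OF \<open>exp (- w) \<le> 1 / w\<close>]) (use t in simp)
  also have "\<dots> = t / (pi * v\<^sup>2)"
    using t v by (simp add: w_def power_divide field_simps power2_eq_square)
  finally show ?thesis .
qed

lemma psi_t_le_far:
  assumes t: "0 < t" and xy: "\<bar>x - y\<bar> \<le> t" and x: "4 < \<bar>x\<bar>" and z: "z \<in> {0..1}"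
  shows "psi_t t (y - z) \<le> 8 / \<bar>x\<bar>"
proof (cases "\<bar>x\<bar> / 2 \<le> t")
  case True
  have "psi_t t (y - z) \<le> 1 / t" by (rule psi_t_le[OF t])
  also have "\<dots> \<le> 1 / (\<bar>x\<bar> / 2)" using True x by (intro divide_left_mono) auto
  also have "\<dots> \<le> 8 / \<bar>x\<bar>" using x by (simp add: field_simps)
  finally show ?thesis .
next
  case False
  \<comment> \<open>\<open>y\<close> lies within \<open>t < |x|/2\<close> of \<open>x\<close>, hence at distance \<open>\<ge> |x|/4\<close> from \<open>[0,1]\<close>\<close>
  have far: "\<bar>x\<bar> / 4 \<le> \<bar>y - z\<bar>" using xy z x False by (auto simp: abs_if split: if_splits)
  have "psi_t t (y - z) \<le> t / (pi * (y - z)\<^sup>2)"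
    using far x by (intro psi_t_le_decay[OF t]) auto
  also have "\<dots> \<le> (\<bar>x\<bar> / 2) / (1 * (\<bar>x\<bar> / 4)\<^sup>2)"
  proof (intro frac_le)
    have "(\<bar>x\<bar> / 4)\<^sup>2 \<le> (y - z)\<^sup>2"
      using far x by (metis abs_le_square_iff abs_divide abs_abs abs_numeral)
    also have "\<dots> \<le> pi * (y - z)\<^sup>2"
      using pi_gt3 mult_right_mono[of 1 pi "(y - z)\<^sup>2"] by simp
    finally show "1 * (\<bar>x\<bar> / 4)\<^sup>2 \<le> pi * (y - z)\<^sup>2" by simp
  qed (use False x in auto)
  also have "\<dots> = 8 / \<bar>x\<bar>" using x by (simp add: power2_eq_square field_simps)
  finally show ?thesis .
qed

lemma nt_max_indicator_le: "nt_max (indicator {0..1}) x \<le> ennreal (if \<bar>x\<bar> \<le> 8 then 1 else 8 / \<bar>x\<bar>)"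
  unfolding nt_max_def
proof (intro Sup_least, clarify)
  fix t y assume t: "0 < t" and xy: "\<bar>x - y\<bar> \<le> t"
  define I where "I = (LINT z|lborel. psi_t t (y - z) * indicator {0..1} z)"
  have "ennreal \<bar>psi_t t (y - z) * indicator {0..1} z\<bar> = ennreal (psi_t t (y - z)) * indicator {0..1} z" for z
    using psi_t_nonneg[OF t] by (auto simp: indicator_def)
  then have I: "ennreal \<bar>I\<bar> \<le> (\<integral>\<^sup>+ z. ennreal (psi_t t (y - z)) * indicator {0..1} z \<partial>lborel)"
    unfolding I_def using abs_integral_le_nn_integral[of lborel "\<lambda>z. psi_t t (y - z) * indicator {0..1} z"]
    by simp
  have "(\<integral>\<^sup>+ z. ennreal (psi_t t (y - z)) * indicator {0..1} z \<partial>lborel)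
      \<le> (\<integral>\<^sup>+ z. ennreal (normal_density y (t / sqrt (2 * pi)) z) \<partial>lborel)"
    using t by (intro nn_integral_mono) (auto simp: psi_t_eq_normal_density indicator_def)
  also have "\<dots> = ennreal 1"
    using t by (subst nn_integral_eq_integral)
      (auto intro!: integrable_normal_density simp: integral_normal_density)
  finally have "\<bar>I\<bar> \<le> 1"
    using I by (auto dest: order.trans)
  moreover have "\<bar>I\<bar> \<le> 8 / \<bar>x\<bar>" if x: "4 < \<bar>x\<bar>"
  proof -
    have "psi_t t (y - z) \<le> 8 / \<bar>x\<bar>" if "z \<in> {0..1}" for z
      using psi_t_le_far[OF t xy x that] .
    then have "(\<integral>\<^sup>+ z. ennreal (psi_t t (y - z)) * indicator {0..1} z \<partial>lborel)
        \<le> (\<integral>\<^sup>+ z. ennreal (8 / \<bar>x\<bar>) * indicator {0..1::real} z \<partial>lborel)"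
      by (intro nn_integral_mono) (auto simp: indicator_def intro!: ennreal_leI)
    also have "\<dots> = ennreal (8 / \<bar>x\<bar>)" by (simp add: nn_integral_cmult_indicator)
    finally show ?thesis
      using I x by (auto dest: order.trans)
  qed
  ultimately show "ennreal \<bar>I\<bar> \<le> ennreal (if \<bar>x\<bar> \<le> 8 then 1 else 8 / \<bar>x\<bar>)"
    by (auto intro: ennreal_leI)
qed

lemma Hp_loc_indicator:
  assumes "0 < d" "d \<le> 1" "d \<le> p / 2"
  shows "Hp_loc p (power_weight d) (indicator {0..1})"
proof -
  have integrable: "integrable lborel (indicator {0..1::real} :: real \<Rightarrow> real)"
    by (intro integrable_real_indicator) auto
  have "set_integrable lborel {a..b} (indicator {0..1} :: real \<Rightarrow> real)" for a b
    unfolding set_integrable_def by (rule integrable_mult_indicator[OF _ integrable]) simp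
  moreover have "wnorm p (power_weight d) (nt_max (indicator {0..1})) \<le> ennreal ((4 * 8 / d) powr (1 / p))"
    by (rule wnorm_power_weight_decay_le[OF assms]) (auto simp: nt_max_indicator_le)
  then have "wnorm p (power_weight d) (nt_max (indicator {0..1})) < top"
    using ennreal_less_top le_less_trans by blast
  ultimately show ?thesis
    using integrable unfolding Hp_loc_def loc_int_def by (auto intro!: exI[of _ 0])
qed

section \<open>Hilbert transform of the indicator of \<open>[0,1]\<close>\<close>

lemma set_integral_inverse_diff:
  fixes c e x :: real
  assumes "c \<le> e" "x \<notin> {c..e}"
  shows "set_integrable lborel {c..e} (\<lambda>y. 1 / (x - y))"
    and "(LINT y:{c..e}|lborel. 1 / (x - y)) = ln \<bar>x - c\<bar> - ln \<bar>x - e\<bar>"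
proof -
  define s :: real where "s = (if e < x then 1 else -1)"
  have pos: "s * (x - y) = \<bar>x - y\<bar>" "0 < \<bar>x - y\<bar>" if "y \<in> {c..e}" for y
    using assms that by (auto simp: s_def)
  have "continuous_on {c..e} (\<lambda>y. 1 / (x - y))"
    using pos(2) by (intro continuous_intros) auto
  then show integrable: "set_integrable lborel {c..e} (\<lambda>y. 1 / (x - y))"
    unfolding set_integrable_def by (intro borel_integrable_compact) auto
  have "((\<lambda>y. 1 / (x - y)) has_integral (- ln (s * (x - e)) - - ln (s * (x - c)))) {c..e}"
  proof (rule fundamental_theorem_of_calculus[OF assms(1)])
    fix y assume "y \<in> {c..e}"
    then have "0 < s * (x - y)" using pos by auto
    then have "s * y < s * x" "s * x - s * y \<noteq> 0" "x - y \<noteq> 0" by (auto simp: right_diff_distrib)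
    then show "((\<lambda>y. - ln (s * (x - y))) has_vector_derivative 1 / (x - y)) (at y within {c..e})"
      unfolding has_real_derivative_iff_has_vector_derivative[symmetric]
      by (auto intro!: derivative_eq_intros simp: field_simps)
  qed
  then show "(LINT y:{c..e}|lborel. 1 / (x - y)) = ln \<bar>x - c\<bar> - ln \<bar>x - e\<bar>"
    using set_borel_integral_eq_integral(2)[OF integrable] assms(1) pos(1)[of c] pos(1)[of e]
    by (simp add: integral_unique)
qed

lemma set_integral_indicator_divide:
  fixes x :: real
  shows "(LINT y:S|lborel. indicator A y / (x - y)) = (LINT y:S \<inter> A|lborel. 1 / (x - y))"
  unfolding set_lebesgue_integral_def by (simp add: indicator_inter_arith)

lemma truncated_hilbert_indicator:
  fixes x :: real
  assumes "x \<noteq> 0" "x \<noteq> 1"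
  shows "\<forall>\<^sub>F \<epsilon> in at_right 0.
    (LINT y:{y. \<epsilon> < \<bar>x - y\<bar> \<and> \<bar>x - y\<bar> < 1 / \<epsilon>}|lborel. indicator {0..1} y / (x - y))
      = ln \<bar>x\<bar> - ln \<bar>x - 1\<bar>"
proof (cases "x \<in> {0..1}")
  case True
  then have x: "0 < x" "x < 1" using assms by auto
  show ?thesis
  proof (rule eventually_at_rightI[of 0 "min (min x (1 - x)) (1 / 2)"])
    fix \<epsilon> :: real assume "\<epsilon> \<in> {0<..<min (min x (1 - x)) (1 / 2)}"
    then have \<epsilon>: "0 < \<epsilon>" "\<epsilon> < x" "\<epsilon> < 1 - x" "2 < 1 / \<epsilon>" by (auto simp: field_simps)
    define S where "S = {y. \<epsilon> < \<bar>x - y\<bar> \<and> \<bar>x - y\<bar> < 1 / \<epsilon>}"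
    have "AE y in lborel. y \<noteq> x - \<epsilon> \<and> y \<noteq> x + \<epsilon>"
      using AE_lborel_singleton[of "x - \<epsilon>"] AE_lborel_singleton[of "x + \<epsilon>"] by eventually_elim auto
    then have ae: "AE y in lborel. y \<in> {0..x - \<epsilon>} \<union> {x + \<epsilon>..1} \<longleftrightarrow> y \<in> S \<inter> {0..1}"
      by eventually_elim (use \<epsilon> in \<open>auto simp: S_def abs_if\<close>)
    have "(LINT y:S|lborel. indicator {0..1} y / (x - y)) = (LINT y:S \<inter> {0..1}|lborel. 1 / (x - y))"
      by (rule set_integral_indicator_divide)
    also have "\<dots> = (LINT y:{0..x - \<epsilon>} \<union> {x + \<epsilon>..1}|lborel. 1 / (x - y))"
      by (rule set_integral_cong_set[OF _ _ ae]) (unfold set_borel_measurable_def S_def, measurable)+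
    also have "\<dots> = (LINT y:{0..x - \<epsilon>}|lborel. 1 / (x - y)) + (LINT y:{x + \<epsilon>..1}|lborel. 1 / (x - y))"
      using \<epsilon> by (intro set_integral_Un_AE set_integral_inverse_diff(1)) auto
    also have "\<dots> = ln \<bar>x\<bar> - ln \<bar>x - 1\<bar>"
      using \<epsilon> by (simp add: set_integral_inverse_diff(2))
    finally show "(LINT y:{y. \<epsilon> < \<bar>x - y\<bar> \<and> \<bar>x - y\<bar> < 1 / \<epsilon>}|lborel. indicator {0..1} y / (x - y))
      = ln \<bar>x\<bar> - ln \<bar>x - 1\<bar>" unfolding S_def .
  qed (use x in auto)
next
  case False
  define r where "r = min \<bar>x\<bar> \<bar>x - 1\<bar>"
  have r: "0 < r" using assms by (auto simp: r_def)
  show ?thesis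
  proof (rule eventually_at_rightI[of 0 "min r (1 / (\<bar>x\<bar> + 1))"])
    fix \<epsilon> :: real assume "\<epsilon> \<in> {0<..<min r (1 / (\<bar>x\<bar> + 1))}"
    then have \<epsilon>: "0 < \<epsilon>" "\<epsilon> < r" "\<bar>x\<bar> + 1 < 1 / \<epsilon>" by (auto simp: field_simps)
    have "{y. \<epsilon> < \<bar>x - y\<bar> \<and> \<bar>x - y\<bar> < 1 / \<epsilon>} \<inter> {0..1} = {0..1}"
      using False \<epsilon> by (auto simp: r_def abs_if)
    then show "(LINT y:{y. \<epsilon> < \<bar>x - y\<bar> \<and> \<bar>x - y\<bar> < 1 / \<epsilon>}|lborel. indicator {0..1} y / (x - y))
      = ln \<bar>x\<bar> - ln \<bar>x - 1\<bar>"
      using False by (simp add: set_integral_indicator_divide set_integral_inverse_diff(2))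
  qed (use r in auto)
qed

definition hilbert_indicator :: "real \<Rightarrow> real" where
  "hilbert_indicator x = (ln \<bar>x\<bar> - ln \<bar>x - 1\<bar>) / pi"

lemma is_hilbert_indicator: "is_hilbert (indicator {0..1}) hilbert_indicator"
  unfolding is_hilbert_def
proof
  show "hilbert_indicator \<in> borel_measurable borel"
    unfolding hilbert_indicator_def by measurable
  have pv: "hilbert_pv (indicator {0..1}) x (hilbert_indicator x)" if "x \<noteq> 0" "x \<noteq> 1" for x
    unfolding hilbert_pv_def hilbert_indicator_def
    by (rule tendsto_eventually, rule eventually_mono[OF truncated_hilbert_indicator[OF that]]) simp
  show "AE x in lborel. hilbert_pv (indicator {0..1}) x (hilbert_indicator x)"
    using AE_lborel_singleton[of 0] AE_lborel_singleton[of 1] by eventually_elim (use pv in auto)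
qed

lemma hilbert_indicator_ge:
  assumes d: "0 < d" "d \<le> 1/2" and x: "0 < x" "x \<le> exp (-1/d)"
  shows "1 / (2 * pi * d) \<le> \<bar>hilbert_indicator x\<bar>"
proof -
  have "exp (-1/d) \<le> exp (-1)" using d by (simp add: field_simps)
  moreover have "exp (-1::real) \<le> 1/2"
    using exp_ge_add_one_self[of 1] by (simp add: exp_minus divide_simps)
  ultimately have x1: "x \<le> 1/2" using x by linarith
  have "ln x \<le> ln (exp (-1/d))" using x by (subst ln_le_cancel_iff) auto
  then have "ln x \<le> -1/d" by simp
  moreover have "ln (exp (-1)) \<le> ln (1 - x)"
    using x x1 \<open>exp (-1) \<le> 1/2\<close> by (subst ln_le_cancel_iff) auto
  then have "-1 \<le> ln (1 - x)" by simp
  moreover have "1 / (2 * d) \<le> 1 / d - 1" using d by (simp add: field_simps)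
  ultimately have L: "1 / (2 * d) \<le> ln (1 - x) - ln x" by linarith
  have "\<bar>hilbert_indicator x\<bar> = (ln (1 - x) - ln x) / pi"
    using x x1 L d by (simp add: hilbert_indicator_def abs_divide abs_minus_commute)
  moreover have "1 / (2 * d) / pi \<le> (ln (1 - x) - ln x) / pi"
    using L by (intro divide_right_mono) auto
  ultimately show ?thesis by (simp add: ac_simps)
qed


lemma nn_integral_hilbert_indicator_ge:
  assumes d: "0 < d" "d \<le> 1/2" and p: "0 < p"
  shows "ennreal ((1 / (2 * pi * d)) powr p * (exp (-1) / d))
     \<le> (\<integral>\<^sup>+x. enn_powr (ennreal \<bar>hilbert_indicator x\<bar>) p * ennreal (power_weight d x) \<partial>lborel)"
proof -
  define x0 where "x0 = exp (-1/d)"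
  have "ennreal ((1 / (2 * pi * d)) powr p) * (ennreal (x powr (d - 1)) * indicator {0..x0} x)
      \<le> enn_powr (ennreal \<bar>hilbert_indicator x\<bar>) p * ennreal (power_weight d x)" for x
  proof (cases "0 < x \<and> x \<le> x0")
    case True
    have "ennreal ((1 / (2 * pi * d)) powr p) \<le> enn_powr (ennreal \<bar>hilbert_indicator x\<bar>) p"
      using hilbert_indicator_ge[OF d, of x] True d p unfolding x0_def by (intro ennreal_le_enn_powr) auto
    then show ?thesis
      using True by (simp add: power_weight_def mult_right_mono)
  next
    case False
    then show ?thesis by (cases "x = 0") (auto simp: indicator_def)
  qed
  then have "ennreal ((1 / (2 * pi * d)) powr p) * (\<integral>\<^sup>+x. ennreal (x powr (d - 1)) * indicator {0..x0} x \<partial>lborel)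
      \<le> (\<integral>\<^sup>+x. enn_powr (ennreal \<bar>hilbert_indicator x\<bar>) p * ennreal (power_weight d x) \<partial>lborel)"
    by (subst nn_integral_cmult[symmetric]) (auto intro: nn_integral_mono)
  moreover have "(\<integral>\<^sup>+x. ennreal (x powr (d - 1)) * indicator {0..x0} x \<partial>lborel) = ennreal (exp (-1) / d)"
    using d by (simp add: x0_def nn_integral_powr_Icc_0 exp_powr_real)
  ultimately show ?thesis
    using d by (subst ennreal_mult) auto
qed

lemma wnorm_hilbert_indicator_ge:
  assumes d: "0 < d" "d \<le> 1/2" and p: "0 < p"
  shows "ennreal (exp (-1/p) / (2 * pi) * d powr (-1/p - 1))
     \<le> wnorm p (power_weight d) (\<lambda>x. ennreal \<bar>hilbert_indicator x\<bar>)"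
proof -
  define A where "A = (1 / (2 * pi * d)) powr p * (exp (-1) / d)"
  have "A powr (1/p) = ((1 / (2 * pi * d)) powr p) powr (1/p) * (exp (-1) / d) powr (1/p)"
    unfolding A_def by (rule powr_mult)
  also have "\<dots> = 1 / (2 * pi * d) * (exp (-1/p) * d powr (-1/p))"
    using d p by (simp add: powr_powr divide_powr_eq exp_powr_real)
  also have "\<dots> = exp (-1/p) / (2 * pi) * d powr (-1/p - 1)"
    using d by (simp add: powr_diff)
  finally have "A powr (1/p) = exp (-1/p) / (2 * pi) * d powr (-1/p - 1)" .
  moreover have "ennreal (A powr (1/p)) \<le> wnorm p (power_weight d) (\<lambda>x. ennreal \<bar>hilbert_indicator x\<bar>)"
    unfolding wnorm_def A_def
    by (rule ennreal_le_enn_powr) (use d p nn_integral_hilbert_indicator_ge[OF d p] in auto)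
  ultimately show ?thesis by simp
qed

lemma hilbert_inequality_power_weight_indicator:
  assumes bound: "\<forall>w f g. in_Aq q w \<longrightarrow> Hp_loc p w f \<longrightarrow> is_hilbert f g \<longrightarrow>
      wnorm p w (\<lambda>x. ennreal \<bar>g x\<bar>) \<le> ennreal (C * Aq_const q w powr \<alpha>) * wnorm p w (Ms s f)"
    and "0 < C" "1 < q" "0 \<le> \<alpha>" and d: "0 < d" "d \<le> 1/2" "d \<le> p/2"
  shows "exp (-1/p) / (2 * pi) * d powr (-1/p - 1) \<le> (C * 4 powr \<alpha> * 8 powr (1/p)) * d powr (- \<alpha> - 1/p)"
proof -
  let ?w = "power_weight d" and ?f = "indicator {0..1} :: real \<Rightarrow> real"
  have d1: "d \<le> 1" and p: "0 < p" using d by auto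
  have "Aq_const q ?w powr \<alpha> \<le> (4 / d) powr \<alpha>"
    using Aq_const_nonneg[OF in_Aq_power_weight] Aq_const_power_weight_le d d1 assms(3,4)
    by (intro powr_mono2) auto
  then have Aq: "ennreal (C * Aq_const q ?w powr \<alpha>) \<le> ennreal (C * (4 / d) powr \<alpha>)"
    using \<open>0 < C\<close> by (intro ennreal_leI mult_left_mono) auto
  have Ms: "wnorm p ?w (Ms s ?f) \<le> ennreal ((4 * 2 / d) powr (1/p))"
    by (rule wnorm_power_weight_decay_le) (use d d1 Ms_indicator_le in auto)
  have "ennreal (exp (-1/p) / (2 * pi) * d powr (-1/p - 1)) \<le> wnorm p ?w (\<lambda>x. ennreal \<bar>hilbert_indicator x\<bar>)"
    using d p by (intro wnorm_hilbert_indicator_ge) auto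
  also have "\<dots> \<le> ennreal (C * Aq_const q ?w powr \<alpha>) * wnorm p ?w (Ms s ?f)"
    using bound in_Aq_power_weight Hp_loc_indicator is_hilbert_indicator d d1 \<open>1 < q\<close> by blast
  also have "\<dots> \<le> ennreal (C * (4 / d) powr \<alpha>) * ennreal ((8 / d) powr (1/p))"
    using Aq Ms by (intro mult_mono) auto
  also have "\<dots> = ennreal (C * (4 / d) powr \<alpha> * (8 / d) powr (1/p))"
    using \<open>0 < C\<close> by (subst ennreal_mult[symmetric]) auto
  also have "C * (4 / d) powr \<alpha> * (8 / d) powr (1/p) = (C * 4 powr \<alpha> * 8 powr (1/p)) * d powr (- \<alpha> - 1/p)"
    using d by (simp add: divide_powr_eq powr_add[symmetric] mult_ac)
  finally show ?thesis
    using \<open>0 < C\<close> by (subst (asm) ennreal_le_iff) auto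
qed

theorem lemma4p6:
  fixes s p q \<alpha> :: real
  assumes "s > 0" and "p > 0" and "q > 1" and "s > 1 / p - 1" and "\<alpha> \<ge> 0"
    and "\<exists>C>0. \<forall>w f g. in_Aq q w \<longrightarrow> Hp_loc p w f \<longrightarrow> is_hilbert f g \<longrightarrow>
           wnorm p w (\<lambda>x. ennreal \<bar>g x\<bar>)
             \<le> ennreal (C * Aq_const q w powr \<alpha>) * wnorm p w (Ms s f)"
  shows "\<alpha> \<ge> 1"
proof -
  obtain C where "C > 0" and bound: "\<forall>w f g. in_Aq q w \<longrightarrow> Hp_loc p w f \<longrightarrow> is_hilbert f g \<longrightarrow>
      wnorm p w (\<lambda>x. ennreal \<bar>g x\<bar>) \<le> ennreal (C * Aq_const q w powr \<alpha>) * wnorm p w (Ms s f)"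
    using assms(6) by blast
  have "- \<alpha> - 1/p \<le> -1/p - 1"
  proof (rule powr_exponent_le_of_bounded_near_0)
    show "0 < exp (-1/p) / (2 * pi)" by simp
    show "0 < min (1/2) (p/2)" using \<open>p > 0\<close> by simp
    show "exp (-1/p) / (2 * pi) * d powr (-1/p - 1) \<le> (C * 4 powr \<alpha> * 8 powr (1/p)) * d powr (- \<alpha> - 1/p)"
      if "0 < d" "d \<le> min (1/2) (p/2)" for d
      using hilbert_inequality_power_weight_indicator[OF bound \<open>C > 0\<close>] that assms(3,5) by simp
  qed
  then show ?thesis by simp
qed

end
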